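(* Let $S$ be a finite set with $|S|\ge2$ and fix $C>1$. Define $\omega_S:F(S)\to[1,\infty)$ by $\omega_S(e)=C^{\gamma_S(e)}$ if $e\neq\theta_S$ and $\omega_S(\theta_S)=C$. Then $\omega_S$ is a submultiplicative weight on $F(S)$. Moreover, defining $\psi:F(S)\to\{0,1\}$ by $\psi(e)=1$ for $e\ne\theta_S$ and $\psi(\theta_S)=0$: (i) $\sup_{e,f\in F(S)}\dfrac{|\psi(e)\psi(f)-\psi(ef)|}{\omega_S(e)\omega_S(f)}\le C^{-|S|}$; (ii) for every multiplicative function $\phi:F(S)\to\{0,1\}$, $\sup_{e\in F(S)}\omega_S(e)^{-1}|\psi(e)-\phi(e)|\ge C^{-1}$.
   Context: $F(S)$ is the free semilattice on $S$: the set of non-empty subsets of $S$ with product given by union. $\gamma_S(e)$ is the cardinality of $e\in F(S)$ (the minimal number of generators needed to produce $e$), and $\theta_S=S$ is the least (zero) element of $F(S)$. A weight $\omega$ is submultiplicative if $\omega(xy)\le\omega(x)\omega(y)$. *)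

theory Defs
  imports Complex_Main
begin

text \<open>Free semilattice F(S): non-empty subsets of S, product = union.\<close>
definition FS :: "'a set \<Rightarrow> 'a set set" where
  "FS S = {e. e \<subseteq> S \<and> e \<noteq> {}}"

definition fs_mult :: "'a set \<Rightarrow> 'a set \<Rightarrow> 'a set" where
  "fs_mult e f = e \<union> f"

text \<open>gamma_S(e): cardinality of e; theta_S = S is the zero element.\<close>
definition gammaS :: "'a set \<Rightarrow> nat" where
  "gammaS e = card e"

definition thetaS :: "'a set \<Rightarrow> 'a set" where
  "thetaS S = S"

definition omegaS :: "real \<Rightarrow> 'a set \<Rightarrow> 'a set \<Rightarrow> real" where
  "omegaS C S e = (if e \<noteq> thetaS S then C ^ gammaS e else C)"

definition psiS :: "'a set \<Rightarrow> 'a set \<Rightarrow> real" where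
  "psiS S e = (if e \<noteq> thetaS S then 1 else 0)"

definition submult_weight :: "'a set \<Rightarrow> ('a set \<Rightarrow> real) \<Rightarrow> bool" where
  "submult_weight S w \<longleftrightarrow> (\<forall>e\<in>FS S. w e \<ge> 1) \<and>
     (\<forall>e\<in>FS S. \<forall>f\<in>FS S. w (fs_mult e f) \<le> w e * w f)"

definition multiplicative01 :: "'a set \<Rightarrow> ('a set \<Rightarrow> real) \<Rightarrow> bool" where
  "multiplicative01 S \<phi> \<longleftrightarrow> (\<forall>e\<in>FS S. \<phi> e \<in> {0, 1}) \<and>
     (\<forall>e\<in>FS S. \<forall>f\<in>FS S. \<phi> (fs_mult e f) = \<phi> e * \<phi> f)"

end

theory Submission
  imports Defs
begin

(* Every e in F(S) is a non-empty subset of S, so 1 <= |e| and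
   omega_S(e) >= C > 1; submultiplicativity reduces to |e u f| <= |e| + |f|,
   and for ef = theta_S to C <= C * C.
   (i) psi fails to be multiplicative at (e,f) only when e, f are proper
   subsets of S with e u f = S; then the defect quotient is C^-(|e|+|f|),
   and |S| <= |e| + |f|.  Every quotient is thus bounded by C^-|S|.
   (ii) A multiplicative {0,1}-valued phi either has phi(S) = 1, so the
   quotient at e = S equals 1/C, or phi(S) = 0; in the latter case phi cannot
   be 1 on all singletons (these generate S), and at a singleton {x} with
   phi {x} = 0, which differs from S because |S| >= 2, the quotient is 1/C.
   Since F(S) is finite, both suprema are controlled pointwise. *)

lemma FS_finite: "finite S \<Longrightarrow> finite (FS S)"
  unfolding FS_def by (rule finite_subset[of _ "Pow S"]) auto

lemma FS_card_pos:
  assumes "finite S" "e \<in> FS S"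
  shows "finite e" and "card e \<ge> 1"
proof -
  show fin: "finite e" using assms unfolding FS_def by (auto intro: finite_subset)
  have "e \<noteq> {}" using assms unfolding FS_def by auto
  then show "card e \<ge> 1" using fin by (simp add: Suc_le_eq card_gt_0_iff)
qed

lemma omegaS_ge_C:
  assumes "finite S" "C > 1" "e \<in> FS S"
  shows "omegaS C S e \<ge> C"
proof -
  have "C ^ 1 \<le> C ^ card e"
    using assms FS_card_pos(2)[OF assms(1,3)] by (intro power_increasing) auto
  then show ?thesis unfolding omegaS_def gammaS_def by auto
qed

lemma omegaS_submult_weight:
  assumes "finite S" "C > 1"
  shows "submult_weight S (omegaS C S)"
  unfolding submult_weight_def
proof (intro conjI ballI)
  fix e assume "e \<in> FS S"
  then show "omegaS C S e \<ge> 1" using omegaS_ge_C[OF assms] assms(2) by force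
next
  fix e f assume e: "e \<in> FS S" and f: "f \<in> FS S"
  show "omegaS C S (fs_mult e f) \<le> omegaS C S e * omegaS C S f"
  proof (cases "e \<union> f = S")
    case True
    have "C * 1 \<le> omegaS C S e * omegaS C S f"
      using omegaS_ge_C[OF assms e] omegaS_ge_C[OF assms f] assms(2) by (intro mult_mono) auto
    then show ?thesis using True unfolding omegaS_def fs_mult_def thetaS_def by auto
  next
    case False
    then have proper: "e \<noteq> S" "f \<noteq> S" using e f unfolding FS_def by auto
    have "C ^ card (e \<union> f) \<le> C ^ (card e + card f)"
      using assms(2) card_Un_le[of e f] by (intro power_increasing) auto
    then show ?thesis using False proper
      unfolding omegaS_def fs_mult_def thetaS_def gammaS_def by (simp add: power_add)
  qed
qed

lemma psiS_defect_bound: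
  assumes "finite S" "C > 1" "e \<in> FS S" "f \<in> FS S"
  shows "\<bar>psiS S e * psiS S f - psiS S (fs_mult e f)\<bar> / (omegaS C S e * omegaS C S f)
           \<le> C powi (- int (card S))"
proof (cases "e \<noteq> S \<and> f \<noteq> S \<and> e \<union> f = S")
  case False
  then have "\<bar>psiS S e * psiS S f - psiS S (fs_mult e f)\<bar> = 0"
    using assms(3,4) unfolding psiS_def thetaS_def fs_mult_def FS_def by auto
  then show ?thesis using assms(2) by simp
next
  case True
  have "card S \<le> card e + card f" using True card_Un_le by metis
  then have "C ^ card S \<le> C ^ (card e + card f)" using assms(2) by (intro power_increasing) auto
  then have "1 / C ^ (card e + card f) \<le> 1 / C ^ card S"
    using assms(2) by (intro divide_left_mono) auto
  moreover have "\<bar>psiS S e * psiS S f - psiS S (fs_mult e f)\<bar> / (omegaS C S e * omegaS C S f)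
                   = 1 / C ^ (card e + card f)"
    using True unfolding psiS_def thetaS_def fs_mult_def omegaS_def gammaS_def
    by (simp add: power_add)
  ultimately show ?thesis by (simp add: power_int_minus field_simps)
qed

lemma multiplicative01_singletons:
  assumes mult: "multiplicative01 S \<phi>" and one: "\<forall>x\<in>S. \<phi> {x} = 1"
  shows "finite A \<Longrightarrow> A \<noteq> {} \<Longrightarrow> A \<subseteq> S \<Longrightarrow> \<phi> A = 1"
proof (induction A rule: finite_ne_induct)
  case (singleton x)
  then show ?case using one by auto
next
  case (insert x F)
  have "{x} \<in> FS S" "F \<in> FS S" using insert unfolding FS_def by auto
  then have "\<phi> (fs_mult {x} F) = \<phi> {x} * \<phi> F"
    using mult unfolding multiplicative01_def by blast
  moreover have "\<phi> {x} = 1" "\<phi> F = 1" using insert one by auto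
  moreover have "insert x F = fs_mult {x} F" unfolding fs_mult_def by auto
  ultimately show ?case by simp
qed

lemma psiS_far_from_multiplicative:
  assumes "finite S" "card S \<ge> 2" and mult: "multiplicative01 S \<phi>"
  obtains e where "e \<in> FS S" and "\<bar>psiS S e - \<phi> e\<bar> / omegaS C S e = 1 / C"
proof (cases "\<phi> S = 1")
  case True
  have "S \<in> FS S" using assms(2) unfolding FS_def by auto
  moreover have "\<bar>psiS S S - \<phi> S\<bar> / omegaS C S S = 1 / C"
    using True unfolding psiS_def thetaS_def omegaS_def by simp
  ultimately show ?thesis by (rule that)
next
  case False
  have "S \<noteq> {}" using assms(2) by auto
  then obtain x where x: "x \<in> S" "\<phi> {x} \<noteq> 1"
    using False multiplicative01_singletons[OF mult, of S] assms(1) by blast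
  have xF: "{x} \<in> FS S" using x unfolding FS_def by auto
  then have "\<phi> {x} = 0" using mult x(2) unfolding multiplicative01_def by auto
  moreover have "{x} \<noteq> S" using assms(2) by auto
  ultimately have "\<bar>psiS S {x} - \<phi> {x}\<bar> / omegaS C S {x} = 1 / C"
    unfolding psiS_def thetaS_def omegaS_def gammaS_def by simp
  with xF show ?thesis by (rule that)
qed

theorem propositionp:
  fixes S :: "'a set" and C :: real
  assumes "finite S" and "card S \<ge> 2" and "C > 1"
  shows "submult_weight S (omegaS C S)
    \<and> (SUP p \<in> FS S \<times> FS S.
          \<bar>psiS S (fst p) * psiS S (snd p) - psiS S (fs_mult (fst p) (snd p))\<bar>
            / (omegaS C S (fst p) * omegaS C S (snd p))) \<le> C powi (- int (card S))
    \<and> (\<forall>\<phi>. multiplicative01 S \<phi> \<longrightarrow>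
          (SUP e \<in> FS S. \<bar>psiS S e - \<phi> e\<bar> / omegaS C S e) \<ge> 1 / C)"
proof (intro conjI allI impI)
  show "submult_weight S (omegaS C S)" using omegaS_submult_weight assms by blast
  have "S \<in> FS S" using assms(2) unfolding FS_def by auto
  then show "(SUP p \<in> FS S \<times> FS S.
          \<bar>psiS S (fst p) * psiS S (snd p) - psiS S (fs_mult (fst p) (snd p))\<bar>
            / (omegaS C S (fst p) * omegaS C S (snd p))) \<le> C powi (- int (card S))"
    using psiS_defect_bound[OF assms(1,3)] by (intro cSUP_least) auto
next
  fix \<phi> assume "multiplicative01 S \<phi>"
  then obtain e where e: "e \<in> FS S" "\<bar>psiS S e - \<phi> e\<bar> / omegaS C S e = 1 / C"
    using psiS_far_from_multiplicative assms(1,2) by blast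
  have "bdd_above ((\<lambda>e. \<bar>psiS S e - \<phi> e\<bar> / omegaS C S e) ` FS S)"
    using FS_finite[OF assms(1)] by simp
  then show "(SUP e \<in> FS S. \<bar>psiS S e - \<phi> e\<bar> / omegaS C S e) \<ge> 1 / C"
    using cSUP_upper[OF e(1)] e(2) by fastforce
qed

end
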